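(* Let $(X,\alpha,T)$ be a dynamical system with $T=\mathbb{Z}$ or $T=\mathbb{R}$ acting by homeomorphisms on a compact metrizable space $X$. Then $\mathcal M=\mathcal M^+\cup\mathcal M^-$, and $\mathcal M^+$ and $\mathcal M^-$ are left ideals of $E$.
   Context: $\alpha^t$ are homeomorphisms with $\alpha^{s+t}=\alpha^s\circ\alpha^t$, $\alpha^0=\mathrm{id}$. $E$ is the closure of $\{\alpha^t:t\in T\}$ in $X^X$ (pointwise convergence topology, composition), $E^+$ and $E^-$ the closures of $\{\alpha^t: t\ge0\}$ and $\{\alpha^t:t\le0\}$. $\mathcal M$, $\mathcal M^+$, $\mathcal M^-$ denote the kernels (unique minimal two-sided ideals) of $E$, $E^+$, $E^-$. A left ideal of $S$ is a non-empty $I\subset S$ with $SI\subset I$. *)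

theory Defs
  imports "HOL-Analysis.Analysis"
begin

text \<open>The time group T is a type 't (instantiated below with int and real).
  The flow is alpha :: 't => 'x => 'x; X is the whole type 'x.
  X^X carries the product (pointwise convergence) topology, which is the
  library's topology on function types (Function_Topology).\<close>

definition dyn_system :: "('t::{topological_space, ab_group_add} \<Rightarrow> 'x::topological_space \<Rightarrow> 'x) \<Rightarrow> bool" where
  "dyn_system \<alpha> \<longleftrightarrow>
     (\<forall>t. \<exists>g. homeomorphism UNIV UNIV (\<alpha> t) g) \<and>
     (\<forall>s t. \<alpha> (s + t) = \<alpha> s \<circ> \<alpha> t) \<and>
     \<alpha> 0 = id \<and>
     continuous_on UNIV (\<lambda>(t, x). \<alpha> t x)"

definition env :: "('t \<Rightarrow> 'x \<Rightarrow> 'x::topological_space) \<Rightarrow> ('x \<Rightarrow> 'x) set" where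
  "env \<alpha> = closure (range \<alpha>)"

definition env_plus :: "('t::{ord,zero} \<Rightarrow> 'x \<Rightarrow> 'x::topological_space) \<Rightarrow> ('x \<Rightarrow> 'x) set" where
  "env_plus \<alpha> = closure (\<alpha> ` {t. 0 \<le> t})"

definition env_minus :: "('t::{ord,zero} \<Rightarrow> 'x \<Rightarrow> 'x::topological_space) \<Rightarrow> ('x \<Rightarrow> 'x) set" where
  "env_minus \<alpha> = closure (\<alpha> ` {t. t \<le> 0})"

definition left_ideal :: "('x \<Rightarrow> 'x) set \<Rightarrow> ('x \<Rightarrow> 'x) set \<Rightarrow> bool" where
  "left_ideal S I \<longleftrightarrow> I \<noteq> {} \<and> I \<subseteq> S \<and> (\<forall>p\<in>S. \<forall>q\<in>I. p \<circ> q \<in> I)"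

definition right_ideal :: "('x \<Rightarrow> 'x) set \<Rightarrow> ('x \<Rightarrow> 'x) set \<Rightarrow> bool" where
  "right_ideal S I \<longleftrightarrow> I \<noteq> {} \<and> I \<subseteq> S \<and> (\<forall>p\<in>S. \<forall>q\<in>I. q \<circ> p \<in> I)"

definition two_sided_ideal :: "('x \<Rightarrow> 'x) set \<Rightarrow> ('x \<Rightarrow> 'x) set \<Rightarrow> bool" where
  "two_sided_ideal S I \<longleftrightarrow> left_ideal S I \<and> right_ideal S I"

definition kernel_sg :: "('x \<Rightarrow> 'x) set \<Rightarrow> ('x \<Rightarrow> 'x) set" where
  "kernel_sg S = (THE K. two_sided_ideal S K \<and>
      (\<forall>J. two_sided_ideal S J \<and> J \<subseteq> K \<longrightarrow> J = K))"

end

(*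
  The enveloping semigroup E is compact, composition is continuous in the left factor, and
  every \<alpha>\<^sup>t commutes with every element of E.  If L is a minimal left ideal of E\<^sup>+ and q \<in> L,
  then L = E\<^sup>+ q; for t < 0 this gives q = r \<alpha>\<^sup>-\<^sup>t q with r \<in> E\<^sup>+, hence \<alpha>\<^sup>t q = r q \<in> L.  So the
  closed set L is invariant under the dense set of all \<alpha>\<^sup>t and therefore under E: minimal left
  ideals of E\<^sup>+ are minimal left ideals of E.  Conversely, a minimal left ideal of E meets
  E\<^sup>+ or E\<^sup>- (as E = E\<^sup>+ \<union> E\<^sup>-), and if q lies in it and in E\<^sup>+, it equals L\<^sub>0 q for some
  minimal left ideal L\<^sub>0 of E\<^sup>+.  The kernel of each of these compact semigroups is the union
  of its minimal left ideals, and time reversal exchanges E\<^sup>+ and E\<^sup>-.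
*)

theory Submission
  imports Defs
begin

section \<open>Self-maps with the topology of pointwise convergence\<close>

lemma compact_UNIV_fun:
  assumes "compact (UNIV :: 'x::topological_space set)"
  shows "compact (UNIV :: ('a \<Rightarrow> 'x) set)"
  using assms compact_space_product_topology[of "\<lambda>_::'a. euclidean :: 'x topology" UNIV]
  by (simp add: compact_space_def euclidean_product_topology)

lemma Hausdorff_space_euclidean_t2: "Hausdorff_space (euclidean :: 'x::t2_space topology)"
  unfolding Hausdorff_space_def disjnt_def by (simp add: separation_t2)

lemma compact_imp_closed_fun:
  fixes K :: "('a \<Rightarrow> 'x::t2_space) set"
  assumes "compact K"
  shows "closed K"
proof -
  have "Hausdorff_space (product_topology (\<lambda>_::'a. euclidean :: 'x topology) UNIV)"
    unfolding Hausdorff_space_product_topology using Hausdorff_space_euclidean_t2 by blast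
  then have "Hausdorff_space (euclidean :: ('a \<Rightarrow> 'x) topology)"
    by (simp only: euclidean_product_topology)
  moreover have "compactin euclidean K"
    using assms by simp
  ultimately have "closedin euclidean K"
    by (rule compactin_imp_closedin)
  then show ?thesis
    by (simp only: closed_closedin)
qed

lemma continuous_on_comp_right: "continuous_on A (\<lambda>p::'a \<Rightarrow> 'b::topological_space. p \<circ> q)"
  unfolding o_def
  by (rule continuous_on_coordinatewise_then_product,
      rule continuous_on_subset[OF continuous_on_product_coordinates]) simp

lemma continuous_on_comp_left:
  assumes "continuous_on UNIV (f :: 'b::topological_space \<Rightarrow> 'c::topological_space)"
  shows "continuous_on A (\<lambda>p::'a \<Rightarrow> 'b. f \<circ> p)"
proof (rule continuous_on_coordinatewise_then_product)
  show "continuous_on A (\<lambda>p::'a \<Rightarrow> 'b. (f \<circ> p) i)" for i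
    unfolding o_def
    by (rule continuous_on_compose2[OF assms
          continuous_on_subset[OF continuous_on_product_coordinates subset_UNIV]]) auto
qed

lemma compact_chain_Inter_nonempty:
  assumes "compact S" "C \<noteq> {}"
    and closed: "\<And>A. A \<in> C \<Longrightarrow> closed A \<and> A \<noteq> {} \<and> A \<subseteq> S"
    and total: "\<And>A B. A \<in> C \<Longrightarrow> B \<in> C \<Longrightarrow> A \<subseteq> B \<or> B \<subseteq> A"
  shows "\<Inter>C \<noteq> {}"
proof -
  have fip: "S \<inter> \<Inter>B \<noteq> {}" if "finite B" "B \<subseteq> C" for B
  proof (cases "B = {}")
    case True
    obtain A where "A \<in> C" using \<open>C \<noteq> {}\<close> by blast
    then show ?thesis using True closed[of A] by auto
  next
    case False
    have "subset.chain C B"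
      using total \<open>B \<subseteq> C\<close> unfolding subset_chain_def by (meson subsetD)
    with \<open>finite B\<close> False have "\<Inter>B \<in> B" by (rule Inter_in_chain)
    then have "\<Inter>B \<in> C" using \<open>B \<subseteq> C\<close> ..
    then show ?thesis using closed[of "\<Inter>B"] by (simp add: Int_absorb1)
  qed
  have "S \<inter> \<Inter>C \<noteq> {}"
  proof (rule compact_imp_fip[OF \<open>compact S\<close>])
    show "closed A" if "A \<in> C" for A
      using closed that by blast
  qed (rule fip)
  then show ?thesis by blast
qed

lemma compact_exists_minimal_closed:
  assumes "compact S" "F \<noteq> {}"
    and closed: "\<And>A. A \<in> F \<Longrightarrow> closed A \<and> A \<noteq> {} \<and> A \<subseteq> S"
    and Inter_chain: "\<And>C. C \<noteq> {} \<Longrightarrow> subset.chain F C \<Longrightarrow> \<Inter>C \<noteq> {} \<Longrightarrow> \<Inter>C \<in> F"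
  shows "\<exists>M\<in>F. \<forall>A\<in>F. A \<subseteq> M \<longrightarrow> A = M"
proof (rule predicate_Zorn)
  show "partial_order_on F (relation_of (\<lambda>A B. B \<subseteq> A) F)"
    by (rule partial_order_on_relation_ofI) auto
next
  fix C assume "C \<in> Chains (relation_of (\<lambda>A B. B \<subseteq> A) F)"
  then have chain: "subset.chain F C"
    by (auto simp: Chains_def relation_of_def subset_chain_def)
  show "\<exists>U\<in>F. \<forall>A\<in>C. U \<subseteq> A"
  proof (cases "C = {}")
    case True
    then show ?thesis using \<open>F \<noteq> {}\<close> by blast
  next
    case False
    have "\<Inter>C \<noteq> {}"
      using chain closed
      by (intro compact_chain_Inter_nonempty[OF \<open>compact S\<close> False]) (auto simp: subset_chain_def)
    then show ?thesis using Inter_chain[OF False chain] by blast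
  qed
qed

section \<open>Minimal left ideals of semigroups of self-maps\<close>

definition comp_closed :: "('x \<Rightarrow> 'x) set \<Rightarrow> bool" where
  "comp_closed S \<longleftrightarrow> (\<forall>p\<in>S. \<forall>q\<in>S. p \<circ> q \<in> S)"

definition min_left_ideal :: "('x \<Rightarrow> 'x) set \<Rightarrow> ('x \<Rightarrow> 'x) set \<Rightarrow> bool" where
  "min_left_ideal S L \<longleftrightarrow> left_ideal S L \<and> (\<forall>L'. left_ideal S L' \<and> L' \<subseteq> L \<longrightarrow> L' = L)"

lemma left_ideal_self: "comp_closed S \<Longrightarrow> S \<noteq> {} \<Longrightarrow> left_ideal S S"
  unfolding comp_closed_def left_ideal_def by blast

lemma left_ideal_subsemigroup:
  assumes "left_ideal S L" "S' \<subseteq> S" "L \<subseteq> S'"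
  shows "left_ideal S' L"
  using assms unfolding left_ideal_def by blast

lemma left_ideal_image_comp_right:
  assumes "comp_closed S" "left_ideal S L" "q \<in> S"
  shows "left_ideal S ((\<lambda>l. l \<circ> q) ` L)"
  unfolding left_ideal_def
proof (intro conjI ballI)
  show "(\<lambda>l. l \<circ> q) ` L \<noteq> {}" "(\<lambda>l. l \<circ> q) ` L \<subseteq> S"
    using assms unfolding comp_closed_def left_ideal_def by auto
  fix p r assume "p \<in> S" "r \<in> (\<lambda>l. l \<circ> q) ` L"
  then obtain l where "l \<in> L" "r = l \<circ> q" by blast
  moreover have "p \<circ> l \<in> L" using \<open>p \<in> S\<close> \<open>l \<in> L\<close> assms(2) unfolding left_ideal_def by blast
  ultimately show "p \<circ> r \<in> (\<lambda>l. l \<circ> q) ` L" by (auto simp: o_assoc)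
qed

lemma left_ideal_Union:
  assumes "\<F> \<noteq> {}" "\<And>L. L \<in> \<F> \<Longrightarrow> left_ideal S L"
  shows "left_ideal S (\<Union>\<F>)"
  using assms unfolding left_ideal_def by blast

lemma min_left_ideal_eq_image:
  assumes "comp_closed S" "min_left_ideal S L" "q \<in> L"
  shows "(\<lambda>p. p \<circ> q) ` S = L"
proof -
  have L: "left_ideal S L" and q: "q \<in> S"
    using assms(2,3) unfolding min_left_ideal_def left_ideal_def by auto
  then have "left_ideal S ((\<lambda>p. p \<circ> q) ` S)"
    using assms(1) by (intro left_ideal_image_comp_right left_ideal_self) auto
  moreover have "(\<lambda>p. p \<circ> q) ` S \<subseteq> L"
    using L assms(3) unfolding left_ideal_def by auto
  ultimately show ?thesis
    using assms(2) unfolding min_left_ideal_def by blast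
qed

lemma min_left_ideal_image_comp_right:
  assumes "comp_closed S" "min_left_ideal S L" "q \<in> S"
  shows "min_left_ideal S ((\<lambda>l. l \<circ> q) ` L)"
  unfolding min_left_ideal_def
proof (intro conjI allI impI)
  show Lq: "left_ideal S ((\<lambda>l. l \<circ> q) ` L)"
    using assms left_ideal_image_comp_right unfolding min_left_ideal_def by blast
  fix L' assume L': "left_ideal S L' \<and> L' \<subseteq> (\<lambda>l. l \<circ> q) ` L"
  then obtain l where l: "l \<in> L" "l \<circ> q \<in> L'"
    unfolding left_ideal_def by blast
  \<comment> \<open>L = S l, hence L q = S (l q) \<subseteq> L'\<close>
  have "(\<lambda>l. l \<circ> q) ` L = (\<lambda>p. p \<circ> (l \<circ> q)) ` S"
    by (simp add: min_left_ideal_eq_image[OF assms(1,2) l(1), symmetric] image_image o_assoc)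
  also have "\<dots> \<subseteq> L'"
    using L' l(2) unfolding left_ideal_def by blast
  finally show "L' = (\<lambda>l. l \<circ> q) ` L" using L' by blast
qed

lemma min_left_ideal_subset_two_sided_ideal:
  assumes "comp_closed S" "min_left_ideal S L" "two_sided_ideal S J"
  shows "L \<subseteq> J"
proof
  fix x assume "x \<in> L"
  have L: "left_ideal S L" using assms(2) unfolding min_left_ideal_def by blast
  have J: "left_ideal S J" "right_ideal S J" using assms(3) unfolding two_sided_ideal_def by blast+
  obtain j where "j \<in> J" "j \<in> S" using J(1) unfolding left_ideal_def by blast
  have "x \<in> S" using L \<open>x \<in> L\<close> unfolding left_ideal_def by blast
  have "j \<circ> x \<in> J" using J(2) \<open>j \<in> J\<close> \<open>x \<in> S\<close> unfolding right_ideal_def by blast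
  have "j \<circ> x \<in> L" using L \<open>j \<in> S\<close> \<open>x \<in> L\<close> unfolding left_ideal_def by blast
  then have "L = (\<lambda>p. p \<circ> (j \<circ> x)) ` S"
    using min_left_ideal_eq_image[OF assms(1,2)] by blast
  also have "\<dots> \<subseteq> J"
    using J(1) \<open>j \<circ> x \<in> J\<close> unfolding left_ideal_def by blast
  finally show "x \<in> J" using \<open>x \<in> L\<close> by blast
qed

lemma two_sided_ideal_Union_min_left_ideals:
  assumes "comp_closed S" "\<exists>L. min_left_ideal S L"
  shows "two_sided_ideal S (\<Union>{L. min_left_ideal S L})"
  unfolding two_sided_ideal_def
proof
  show "left_ideal S (\<Union>{L. min_left_ideal S L})"
    using assms(2) by (intro left_ideal_Union) (auto simp: min_left_ideal_def)
  show "right_ideal S (\<Union>{L. min_left_ideal S L})"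
    unfolding right_ideal_def
  proof (intro conjI ballI)
    show "\<Union>{L. min_left_ideal S L} \<noteq> {}" "\<Union>{L. min_left_ideal S L} \<subseteq> S"
      using \<open>left_ideal S (\<Union>{L. min_left_ideal S L})\<close> unfolding left_ideal_def by blast+
    fix p q assume "p \<in> S" "q \<in> \<Union>{L. min_left_ideal S L}"
    then obtain L where "min_left_ideal S L" "q \<in> L" by blast
    then have "min_left_ideal S ((\<lambda>l. l \<circ> p) ` L)" "q \<circ> p \<in> (\<lambda>l. l \<circ> p) ` L"
      using min_left_ideal_image_comp_right[OF assms(1) _ \<open>p \<in> S\<close>] by auto
    then show "q \<circ> p \<in> \<Union>{L. min_left_ideal S L}" by blast
  qed
qed

lemma kernel_sg_eqI:
  assumes "two_sided_ideal S K" "\<And>J. two_sided_ideal S J \<Longrightarrow> K \<subseteq> J"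
  shows "kernel_sg S = K"
  unfolding kernel_sg_def
  by (rule the_equality) (use assms in blast)+

lemma kernel_sg_eq_Union_min_left_ideals:
  assumes "comp_closed S" "\<exists>L. min_left_ideal S L"
  shows "kernel_sg S = \<Union>{L. min_left_ideal S L}"
  using assms min_left_ideal_subset_two_sided_ideal
  by (intro kernel_sg_eqI two_sided_ideal_Union_min_left_ideals) blast+

lemma min_left_ideal_exists:
  fixes S :: "('x::t2_space \<Rightarrow> 'x) set"
  assumes "comp_closed S" "compact S" "S \<noteq> {}"
  shows "\<exists>L. min_left_ideal S L"
proof -
  define F where "F = {L. left_ideal S L \<and> closed L}"
  have closed_principal: "(\<lambda>p. p \<circ> x) ` S \<in> F" if "x \<in> S" for x
  proof -
    have "compact ((\<lambda>p. p \<circ> x) ` S)"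
      by (rule compact_continuous_image[OF continuous_on_comp_right \<open>compact S\<close>])
    then show ?thesis
      using assms that compact_imp_closed_fun left_ideal_image_comp_right left_ideal_self
      unfolding F_def by blast
  qed
  have "\<exists>M\<in>F. \<forall>L\<in>F. L \<subseteq> M \<longrightarrow> L = M"
  proof (rule compact_exists_minimal_closed[OF \<open>compact S\<close>])
    show "F \<noteq> {}"
      using assms compact_imp_closed_fun left_ideal_self unfolding F_def by blast
    show "closed L \<and> L \<noteq> {} \<and> L \<subseteq> S" if "L \<in> F" for L
      using that unfolding F_def left_ideal_def by blast
  next
    fix C assume C: "C \<noteq> {}" "subset.chain F C" "\<Inter>C \<noteq> {}"
    then have "closed L" "left_ideal S L" if "L \<in> C" for L
      using that unfolding F_def subset_chain_def by blast+
    then have "closed (\<Inter>C)" "left_ideal S (\<Inter>C)"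
      using C unfolding left_ideal_def by blast+
    then show "\<Inter>C \<in> F" unfolding F_def by blast
  qed
  then obtain M where "M \<in> F" and M: "\<And>L. L \<in> F \<Longrightarrow> L \<subseteq> M \<Longrightarrow> L = M"
    by blast
  \<comment> \<open>every left ideal L contains the closed left ideal S x for any x \<in> L\<close>
  have "min_left_ideal S M"
    unfolding min_left_ideal_def
  proof (intro conjI allI impI)
    show "left_ideal S M" using \<open>M \<in> F\<close> unfolding F_def by blast
    fix L assume L: "left_ideal S L \<and> L \<subseteq> M"
    then obtain x where "x \<in> L" "x \<in> S" unfolding left_ideal_def by blast
    then have "(\<lambda>p. p \<circ> x) ` S \<subseteq> L"
      using L unfolding left_ideal_def by blast
    then show "L = M" using M[OF closed_principal[OF \<open>x \<in> S\<close>]] L by blast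
  qed
  then show ?thesis by blast
qed

section \<open>Enveloping semigroups of a flow on a compact space\<close>

lemma comp_closed_closure:
  fixes S :: "('x::topological_space \<Rightarrow> 'x) set"
  assumes "comp_closed S" and continuous: "\<And>f. f \<in> S \<Longrightarrow> continuous_on UNIV f"
  shows "comp_closed (closure S)"
proof -
  have left: "f \<circ> q \<in> closure S" if "f \<in> S" "q \<in> closure S" for f q
  proof -
    have "(\<lambda>q. f \<circ> q) ` closure S \<subseteq> closure S"
    proof (rule image_closure_subset)
      show "continuous_on (closure S) (\<lambda>q. f \<circ> q)"
        by (rule continuous_on_comp_left[OF continuous[OF \<open>f \<in> S\<close>]])
      show "(\<lambda>q. f \<circ> q) ` S \<subseteq> closure S"
        using assms(1) \<open>f \<in> S\<close> closure_subset unfolding comp_closed_def by blast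
    qed simp
    then show ?thesis using \<open>q \<in> closure S\<close> by blast
  qed
  show ?thesis
    unfolding comp_closed_def
  proof (intro ballI)
    fix p q assume "p \<in> closure S" "q \<in> closure S"
    have "(\<lambda>p. p \<circ> q) ` closure S \<subseteq> closure S"
      by (rule image_closure_subset[OF continuous_on_comp_right closed_closure])
         (use left \<open>q \<in> closure S\<close> in blast)
    then show "p \<circ> q \<in> closure S" using \<open>p \<in> closure S\<close> by blast
  qed
qed

lemma env_reverse: "env (\<lambda>t. \<alpha> (- t :: 't::ab_group_add)) = env \<alpha>"
proof -
  have "range (uminus :: 't \<Rightarrow> 't) = UNIV"
    by (rule surjI[of _ uminus]) simp
  then have "range (\<lambda>t. \<alpha> (- t)) = range \<alpha>"
    by (metis image_image)
  then show ?thesis unfolding env_def by simp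
qed

lemma env_plus_reverse: "env_plus (\<lambda>t. \<alpha> (- t :: 't::ordered_ab_group_add)) = env_minus \<alpha>"
proof -
  have "uminus ` {t::'t. 0 \<le> t} = {t. t \<le> 0}"
    by (auto intro: image_eqI[where x = "- t" for t])
  then have "(\<lambda>t. \<alpha> (- t)) ` {t. 0 \<le> t} = \<alpha> ` {t. t \<le> 0}"
    by (metis image_image)
  then show ?thesis unfolding env_plus_def env_minus_def by simp
qed

locale compact_flow =
  fixes \<alpha> :: "'t::linordered_ab_group_add \<Rightarrow> 'x::t2_space \<Rightarrow> 'x"
  assumes continuous_flow: "\<And>t. continuous_on UNIV (\<alpha> t)"
    and flow_add: "\<And>s t. \<alpha> (s + t) = \<alpha> s \<circ> \<alpha> t"
    and flow_zero: "\<alpha> 0 = id"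
    and compact_UNIV: "compact (UNIV :: 'x set)"
begin

lemma compact_flow_reverse: "compact_flow (\<lambda>t. \<alpha> (- t))"
  by unfold_locales
    (simp_all add: continuous_flow flow_zero compact_UNIV flow_add[symmetric] add.commute)

lemma comp_closed_closure_image:
  assumes "\<And>s t. s \<in> T \<Longrightarrow> t \<in> T \<Longrightarrow> s + t \<in> T"
  shows "comp_closed (closure (\<alpha> ` T))"
  by (rule comp_closed_closure) (auto simp: comp_closed_def flow_add[symmetric] assms continuous_flow)

lemma comp_closed_env: "comp_closed (env \<alpha>)"
  unfolding env_def by (rule comp_closed_closure_image) simp

lemma comp_closed_env_plus: "comp_closed (env_plus \<alpha>)"
  unfolding env_plus_def by (rule comp_closed_closure_image) simp

lemma compact_closure_flow: "compact (closure (\<alpha> ` T))"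
  using compact_Int_closed[OF compact_UNIV_fun[OF compact_UNIV] closed_closure] by simp

lemma compact_env_plus: "compact (env_plus \<alpha>)"
  unfolding env_plus_def by (rule compact_closure_flow)

lemma flow_in_env_plus: "0 \<le> t \<Longrightarrow> \<alpha> t \<in> env_plus \<alpha>"
  unfolding env_plus_def by (blast intro: closure_subset[THEN subsetD])

lemma env_plus_nonempty: "env_plus \<alpha> \<noteq> {}"
  using flow_in_env_plus[of 0] by blast

lemma env_plus_subset_env: "env_plus \<alpha> \<subseteq> env \<alpha>"
  unfolding env_plus_def env_def by (rule closure_mono) blast

lemma env_eq_Un: "env \<alpha> = env_plus \<alpha> \<union> env_minus \<alpha>"
proof -
  have "{t. 0 \<le> t} \<union> {t. t \<le> 0} = (UNIV :: 't set)"
    by (auto simp: linear)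
  then have "range \<alpha> = \<alpha> ` {t. 0 \<le> t} \<union> \<alpha> ` {t. t \<le> 0}"
    by (metis image_Un)
  then show ?thesis unfolding env_def env_plus_def env_minus_def by simp
qed

lemma flow_comp_commute:
  assumes "p \<in> env \<alpha>"
  shows "\<alpha> t \<circ> p = p \<circ> \<alpha> t"
proof -
  have "closed {p. \<alpha> t (p x) = p (\<alpha> t x)}" for x
  proof (rule closed_Collect_eq)
    show "continuous_on UNIV (\<lambda>p. \<alpha> t (p x))"
      by (rule continuous_on_compose2[OF continuous_flow continuous_on_product_coordinates]) auto
  qed simp
  then have "closed (\<Inter>x. {p. \<alpha> t (p x) = p (\<alpha> t x)})"
    by blast
  moreover have "range \<alpha> \<subseteq> (\<Inter>x. {p. \<alpha> t (p x) = p (\<alpha> t x)})"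
  proof
    fix f assume "f \<in> range \<alpha>"
    then obtain s where "f = \<alpha> s" by blast
    moreover have "\<alpha> t \<circ> \<alpha> s = \<alpha> s \<circ> \<alpha> t"
      by (metis flow_add add.commute)
    ultimately show "f \<in> (\<Inter>x. {p. \<alpha> t (p x) = p (\<alpha> t x)})"
      by (simp add: fun_eq_iff)
  qed
  ultimately have "env \<alpha> \<subseteq> (\<Inter>x. {p. \<alpha> t (p x) = p (\<alpha> t x)})"
    unfolding env_def by (rule closure_minimal[rotated])
  then show ?thesis using assms by (auto simp: fun_eq_iff)
qed

lemma flow_comp_in_min_left_ideal_env_plus:
  assumes L: "min_left_ideal (env_plus \<alpha>) L" and "q \<in> L"
  shows "\<alpha> t \<circ> q \<in> L"
proof (cases "0 \<le> t")
  case True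
  then show ?thesis
    using L \<open>q \<in> L\<close> flow_in_env_plus unfolding min_left_ideal_def left_ideal_def by blast
next
  case False
  then have "\<alpha> (- t) \<circ> q \<in> L"
    using L \<open>q \<in> L\<close> flow_in_env_plus[of "- t"]
    unfolding min_left_ideal_def left_ideal_def by auto
  then obtain r where r: "r \<in> env_plus \<alpha>" "q = r \<circ> (\<alpha> (- t) \<circ> q)"
    using min_left_ideal_eq_image[OF comp_closed_env_plus L] \<open>q \<in> L\<close> by blast
  have "\<alpha> t \<circ> q = (\<alpha> t \<circ> r) \<circ> \<alpha> (- t) \<circ> q"
    using r(2) by (metis comp_assoc)
  also have "\<dots> = r \<circ> (\<alpha> t \<circ> \<alpha> (- t)) \<circ> q"
    using flow_comp_commute[of r t] r(1) env_plus_subset_env by (auto simp flip: comp_assoc)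
  also have "\<dots> = r \<circ> q"
    by (simp add: flow_add[symmetric] flow_zero)
  finally show ?thesis
    using L r(1) \<open>q \<in> L\<close> unfolding min_left_ideal_def left_ideal_def by auto
qed

lemma min_left_ideal_env_plus_imp_env:
  assumes L: "min_left_ideal (env_plus \<alpha>) L"
  shows "min_left_ideal (env \<alpha>) L"
proof -
  have L_plus: "left_ideal (env_plus \<alpha>) L"
    using L unfolding min_left_ideal_def by blast
  then have L_ne: "L \<noteq> {}" and L_sub: "L \<subseteq> env_plus \<alpha>"
    unfolding left_ideal_def by blast+
  have mult: "p \<circ> q \<in> L" if "q \<in> L" "p \<in> env \<alpha>" for p q
  proof -
    have "compact ((\<lambda>p. p \<circ> q) ` env_plus \<alpha>)"
      unfolding env_plus_def
      by (rule compact_continuous_image[OF continuous_on_comp_right compact_closure_flow])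
    then have "compact L"
      using min_left_ideal_eq_image[OF comp_closed_env_plus L \<open>q \<in> L\<close>] by simp
    have "(\<lambda>p. p \<circ> q) ` closure (range \<alpha>) \<subseteq> L"
    proof (rule image_closure_subset[OF continuous_on_comp_right])
      show "closed L" using \<open>compact L\<close> by (rule compact_imp_closed_fun)
      show "(\<lambda>p. p \<circ> q) ` range \<alpha> \<subseteq> L"
        using flow_comp_in_min_left_ideal_env_plus[OF L \<open>q \<in> L\<close>] by blast
    qed
    then show ?thesis using \<open>p \<in> env \<alpha>\<close> unfolding env_def by blast
  qed
  have "left_ideal (env \<alpha>) L"
    unfolding left_ideal_def using L_ne L_sub env_plus_subset_env mult by blast
  moreover have "L' = L" if "left_ideal (env \<alpha>) L'" "L' \<subseteq> L" for L'
  proof -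
    have "left_ideal (env_plus \<alpha>) L'"
      using that L_sub env_plus_subset_env by (blast intro: left_ideal_subsemigroup)
    then show ?thesis using L \<open>L' \<subseteq> L\<close> unfolding min_left_ideal_def by blast
  qed
  ultimately show ?thesis unfolding min_left_ideal_def by blast
qed

lemma ex_min_left_ideal_env_plus: "\<exists>L. min_left_ideal (env_plus \<alpha>) L"
  by (rule min_left_ideal_exists[OF comp_closed_env_plus compact_env_plus env_plus_nonempty])

lemma min_left_ideal_env_imp_env_plus:
  assumes L: "min_left_ideal (env \<alpha>) L" and "q \<in> L" "q \<in> env_plus \<alpha>"
  shows "min_left_ideal (env_plus \<alpha>) L"
proof -
  obtain L0 where L0: "min_left_ideal (env_plus \<alpha>) L0"
    using ex_min_left_ideal_env_plus by blast
  have Lq: "min_left_ideal (env_plus \<alpha>) ((\<lambda>l. l \<circ> q) ` L0)"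
    by (rule min_left_ideal_image_comp_right[OF comp_closed_env_plus L0 \<open>q \<in> env_plus \<alpha>\<close>])
  have "L0 \<subseteq> env \<alpha>"
    using L0 env_plus_subset_env unfolding min_left_ideal_def left_ideal_def
    by (meson subset_trans)
  then have "(\<lambda>l. l \<circ> q) ` L0 \<subseteq> L"
    using L \<open>q \<in> L\<close> unfolding min_left_ideal_def left_ideal_def by blast
  moreover have "left_ideal (env \<alpha>) ((\<lambda>l. l \<circ> q) ` L0)"
    using min_left_ideal_env_plus_imp_env[OF Lq] unfolding min_left_ideal_def by (rule conjunct1)
  ultimately have "(\<lambda>l. l \<circ> q) ` L0 = L"
    using L unfolding min_left_ideal_def by blast
  then show ?thesis using Lq by simp
qed

lemma kernel_env_plus_eq: "kernel_sg (env_plus \<alpha>) = \<Union>{L. min_left_ideal (env_plus \<alpha>) L}"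
  by (rule kernel_sg_eq_Union_min_left_ideals[OF comp_closed_env_plus ex_min_left_ideal_env_plus])

lemma left_ideal_env_kernel_env_plus: "left_ideal (env \<alpha>) (kernel_sg (env_plus \<alpha>))"
  unfolding kernel_env_plus_eq
proof (rule left_ideal_Union)
  show "{L. min_left_ideal (env_plus \<alpha>) L} \<noteq> {}"
    using ex_min_left_ideal_env_plus by blast
  show "left_ideal (env \<alpha>) L" if "L \<in> {L. min_left_ideal (env_plus \<alpha>) L}" for L
    using min_left_ideal_env_plus_imp_env that unfolding min_left_ideal_def by blast
qed

lemma left_ideal_env_kernel_env_minus: "left_ideal (env \<alpha>) (kernel_sg (env_minus \<alpha>))"
proof -
  interpret reverse: compact_flow "\<lambda>t. \<alpha> (- t)" by (rule compact_flow_reverse)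
  show ?thesis
    using reverse.left_ideal_env_kernel_env_plus by (simp add: env_reverse env_plus_reverse)
qed

lemma min_left_ideal_env_iff:
  "min_left_ideal (env \<alpha>) L \<longleftrightarrow> min_left_ideal (env_plus \<alpha>) L \<or> min_left_ideal (env_minus \<alpha>) L"
proof -
  interpret reverse: compact_flow "\<lambda>t. \<alpha> (- t)" by (rule compact_flow_reverse)
  have minus_imp_env: "min_left_ideal (env_minus \<alpha>) L \<Longrightarrow> min_left_ideal (env \<alpha>) L"
    using reverse.min_left_ideal_env_plus_imp_env by (simp add: env_reverse env_plus_reverse)
  have env_imp_minus: "min_left_ideal (env \<alpha>) L \<Longrightarrow> q \<in> L \<Longrightarrow> q \<in> env_minus \<alpha> \<Longrightarrow>
      min_left_ideal (env_minus \<alpha>) L" for q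
    using reverse.min_left_ideal_env_imp_env_plus by (simp add: env_reverse env_plus_reverse)
  show ?thesis
  proof
    assume L: "min_left_ideal (env \<alpha>) L"
    then obtain q where "q \<in> L" "q \<in> env \<alpha>"
      unfolding min_left_ideal_def left_ideal_def by blast
    then show "min_left_ideal (env_plus \<alpha>) L \<or> min_left_ideal (env_minus \<alpha>) L"
      using min_left_ideal_env_imp_env_plus[OF L] env_imp_minus[OF L] env_eq_Un by blast
  qed (use min_left_ideal_env_plus_imp_env minus_imp_env in blast)
qed

lemma kernel_env_eq_Un: "kernel_sg (env \<alpha>) = kernel_sg (env_plus \<alpha>) \<union> kernel_sg (env_minus \<alpha>)"
proof -
  interpret reverse: compact_flow "\<lambda>t. \<alpha> (- t)" by (rule compact_flow_reverse)
  have "\<exists>L. min_left_ideal (env \<alpha>) L"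
    using ex_min_left_ideal_env_plus min_left_ideal_env_plus_imp_env by blast
  then have "kernel_sg (env \<alpha>) = \<Union>{L. min_left_ideal (env \<alpha>) L}"
    by (rule kernel_sg_eq_Union_min_left_ideals[OF comp_closed_env])
  also have "\<dots> =
      \<Union>{L. min_left_ideal (env_plus \<alpha>) L} \<union> \<Union>{L. min_left_ideal (env_minus \<alpha>) L}"
    unfolding min_left_ideal_env_iff Collect_disj_eq by (rule Union_Un_distrib)
  also have "\<dots> = kernel_sg (env_plus \<alpha>) \<union> kernel_sg (env_minus \<alpha>)"
    using kernel_env_plus_eq reverse.kernel_env_plus_eq by (simp add: env_plus_reverse)
  finally show ?thesis .
qed

end

lemma dyn_system_imp_compact_flow:
  fixes \<alpha> :: "'t::{linordered_ab_group_add, topological_space} \<Rightarrow> 'x::t2_space \<Rightarrow> 'x"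
  assumes "dyn_system \<alpha>" "compact (UNIV :: 'x set)"
  shows "compact_flow \<alpha>"
proof
  show "continuous_on UNIV (\<alpha> t)" for t
    using assms(1) unfolding dyn_system_def homeomorphism_def by blast
qed (use assms in \<open>simp_all add: dyn_system_def\<close>)

lemma dyn_system_kernel_env:
  fixes \<alpha> :: "'t::{linordered_ab_group_add, topological_space} \<Rightarrow> 'x::t2_space \<Rightarrow> 'x"
  assumes "dyn_system \<alpha>" "compact (UNIV :: 'x set)"
  shows "kernel_sg (env \<alpha>) = kernel_sg (env_plus \<alpha>) \<union> kernel_sg (env_minus \<alpha>) \<and>
    left_ideal (env \<alpha>) (kernel_sg (env_plus \<alpha>)) \<and> left_ideal (env \<alpha>) (kernel_sg (env_minus \<alpha>))"
proof -
  interpret compact_flow \<alpha>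
    using assms by (rule dyn_system_imp_compact_flow)
  show ?thesis
    using kernel_env_eq_Un left_ideal_env_kernel_env_plus left_ideal_env_kernel_env_minus by blast
qed

theorem corollary3p8:
  fixes X_type :: "'x::metric_space itself"
  assumes "compact (UNIV :: 'x set)"
  shows "(\<forall>\<alpha> :: int \<Rightarrow> 'x \<Rightarrow> 'x. dyn_system \<alpha> \<longrightarrow>
            kernel_sg (env \<alpha>) = kernel_sg (env_plus \<alpha>) \<union> kernel_sg (env_minus \<alpha>) \<and>
            left_ideal (env \<alpha>) (kernel_sg (env_plus \<alpha>)) \<and>
            left_ideal (env \<alpha>) (kernel_sg (env_minus \<alpha>)))
       \<and> (\<forall>\<alpha> :: real \<Rightarrow> 'x \<Rightarrow> 'x. dyn_system \<alpha> \<longrightarrow>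
            kernel_sg (env \<alpha>) = kernel_sg (env_plus \<alpha>) \<union> kernel_sg (env_minus \<alpha>) \<and>
            left_ideal (env \<alpha>) (kernel_sg (env_plus \<alpha>)) \<and>
            left_ideal (env \<alpha>) (kernel_sg (env_minus \<alpha>)))"
  by (simp add: dyn_system_kernel_env assms)

end
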